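(* Let $d\ge2$, $\varepsilon>0$, $N\in\mathbb{N}$, weights $w_1,\dots,w_N>0$, and let $v_1(t),\dots,v_N(t)\in\mathbb{R}^d$ be a (differentiable) solution of the semidiscrete particle system \[ \frac{dv_i}{dt}=-\sum_{j=1}^N w_jA(v_i-v_j)\left[\nabla\frac{\delta E^N_\varepsilon}{\delta f}(v_i)-\nabla\frac{\delta E^N_\varepsilon}{\delta f}(v_j)\right],\qquad i=1,\dots,N, \] where \[ \nabla\frac{\delta E^N_\varepsilon}{\delta f}(x)=\int_{\mathbb{R}^d}\nabla\psi_\varepsilon(x-v)\log\Big(\sum_{k=1}^N w_k\psi_\varepsilon(v-v_k(t))\Big)\,\mathrm{d}v . \] Then: 1) $\frac{d}{dt}\sum_{i=1}^N w_i\phi(v_i)=0$ for $\phi(v)=1$, $\phi(v)=v$ and $\phi(v)=|v|^2$ (conservation of mass, momentum and energy); 2) with the discrete entropy $E^N_\varepsilon=\int_{\mathbb{R}^d}(f^N*\psi_\varepsilon)\log(f^N*\psi_\varepsilon)\,\mathrm{d}v$, where $f^N(t,v)=\sum_{i=1}^Nw_i\delta(v-v_i(t))$, one has $\frac{d}{dt}E^N_\varepsilon=-D^N_\varepsilon\le0$, where \[ D^N_\varepsilon=\frac12\sum_{i,j}w_iw_j\left(\nabla\frac{\delta E^N_\varepsilon}{\delta f}(v_i)-\nabla\frac{\delta E^N_\varepsilon}{\delta f}(v_j)\right)\cdot A(v_i-v_j)\left(\nabla\frac{\delta E^N_\varepsilon}{\delta f}(v_i)-\nabla\frac{\delta E^N_\varepsilon}{\delta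 f}(v_j)\right). \]
   Context: $A(z)=|z|^{\gamma}(|z|^2I_d-z\otimes z)$ for a fixed exponent $\gamma$, with $A(0)=0$ understood where needed; $A(z)$ is symmetric positive semidefinite with kernel spanned by $z$. $\psi_\varepsilon(v)=(2\pi\varepsilon)^{-d/2}\exp(-|v|^2/(2\varepsilon))$ is the Gaussian mollifier, and $f^N*\psi_\varepsilon(v)=\sum_i w_i\psi_\varepsilon(v-v_i(t))$. *)

theory Defs
  imports "HOL-Analysis.Analysis"
begin

definition outer :: "real^'n \<Rightarrow> real^'n \<Rightarrow> real^'n^'n" where
  "outer x y = (\<chi> i j. x $ i * y $ j)"

definition Amat :: "real \<Rightarrow> real^'n \<Rightarrow> real^'n^'n" where
  "Amat \<gamma> z = (if z = 0 then 0 else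
     (norm z powr \<gamma>) *\<^sub>R ((norm z)\<^sup>2 *\<^sub>R mat 1 - outer z z))"

definition psi :: "real \<Rightarrow> real^'n \<Rightarrow> real" where
  "psi \<epsilon> v = (2 * pi * \<epsilon>) powr (- real CARD('n) / 2) * exp (- (norm v)\<^sup>2 / (2 * \<epsilon>))"

definition grad_psi :: "real \<Rightarrow> real^'n \<Rightarrow> real^'n" where
  "grad_psi \<epsilon> x = (THE g. (psi \<epsilon> has_derivative (\<lambda>h. g \<bullet> h)) (at x))"

definition mollified :: "real \<Rightarrow> nat \<Rightarrow> (nat \<Rightarrow> real) \<Rightarrow> (nat \<Rightarrow> real \<Rightarrow> real^'n) \<Rightarrow> real \<Rightarrow> real^'n \<Rightarrow> real" where
  "mollified \<epsilon> N w v t x = (\<Sum>k<N. w k * psi \<epsilon> (x - v k t))"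

definition gradE :: "real \<Rightarrow> nat \<Rightarrow> (nat \<Rightarrow> real) \<Rightarrow> (nat \<Rightarrow> real \<Rightarrow> real^'n) \<Rightarrow> real \<Rightarrow> real^'n \<Rightarrow> real^'n" where
  "gradE \<epsilon> N w v t x =
     (LINT y|lborel. ln (mollified \<epsilon> N w v t y) *\<^sub>R grad_psi \<epsilon> (x - y))"

definition entropyN :: "real \<Rightarrow> nat \<Rightarrow> (nat \<Rightarrow> real) \<Rightarrow> (nat \<Rightarrow> real \<Rightarrow> real^'n) \<Rightarrow> real \<Rightarrow> real" where
  "entropyN \<epsilon> N w v t =
     (LINT y|lborel. mollified \<epsilon> N w v t y * ln (mollified \<epsilon> N w v t y))"

definition dissipN :: "real \<Rightarrow> real \<Rightarrow> nat \<Rightarrow> (nat \<Rightarrow> real) \<Rightarrow> (nat \<Rightarrow> real \<Rightarrow> real^'n) \<Rightarrow> real \<Rightarrow> real" where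
  "dissipN \<gamma> \<epsilon> N w v t = 1/2 * (\<Sum>i<N. \<Sum>j<N. w i * w j *
     ((gradE \<epsilon> N w v t (v i t) - gradE \<epsilon> N w v t (v j t)) \<bullet>
      (Amat \<gamma> (v i t - v j t) *v (gradE \<epsilon> N w v t (v i t) - gradE \<epsilon> N w v t (v j t)))))"

end

theory Submission
  imports Defs "HOL-Probability.Distributions"
begin

text \<open>
  The velocity of particle i is -sum_j w_j c_ij with c_ij = A(v_i - v_j)(G_i - G_j), where G_i is
  the entropy gradient at v_i. Since A(-z) = A(z), c is antisymmetric, so symmetrising the double
  sums gives conservation of momentum, conservation of energy (v_i - v_j lies in the kernel of
  A(v_i - v_j)), and dE/dt = sum_i w_i G_i . v_i' = -1/2 sum_ij w_i w_j (G_i - G_j) . c_ij = -D,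
  which is nonpositive because A is positive semidefinite.

  The analytic content is the first identity for dE/dt. For particles in a ball the mollified
  density m lies between two Gaussians, so |ln m| grows at most quadratically in y and m ln m is
  Lipschitz along the flow with an integrable Gaussian envelope. Dominated convergence then
  differentiates E = int m ln m under the integral sign, and the constant in ln m + 1 contributes
  nothing because psi_eps is even, so its gradient has integral zero.
\<close>

section \<open>Gaussian integrals\<close>

lemma integrable_exp_neg_square:
  fixes \<beta> :: real
  assumes "\<beta> > 0"
  shows "integrable lborel (\<lambda>x::real. exp (- \<beta> * x\<^sup>2))"
proof -
  define \<sigma> where "\<sigma> = sqrt (1 / (2 * \<beta>))"
  have "\<sigma> > 0" and \<sigma>2: "\<sigma>\<^sup>2 = 1 / (2 * \<beta>)"
    using assms by (simp_all add: \<sigma>_def)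
  have "exp (- \<beta> * x\<^sup>2) = sqrt (2 * pi * \<sigma>\<^sup>2) * normal_density 0 \<sigma> x" for x
    using \<open>\<sigma> > 0\<close> assms by (simp add: normal_density_def \<sigma>2 field_simps)
  moreover have "integrable lborel (\<lambda>x. sqrt (2 * pi * \<sigma>\<^sup>2) * normal_density 0 \<sigma> x)"
    using \<open>\<sigma> > 0\<close> by (intro integrable_mult_right integrable_normal_density)
  ultimately show ?thesis by simp
qed

lemma integrable_exp_neg_norm_square:
  fixes \<beta> :: real
  assumes "\<beta> > 0"
  shows "integrable lborel (\<lambda>x::'a::euclidean_space. exp (- \<beta> * (norm x)\<^sup>2))"
proof (rule integrableI_nonneg)
  have factor: "ennreal (exp (- \<beta> * (norm x)\<^sup>2)) = (\<Prod>b\<in>Basis. ennreal (exp (- \<beta> * (x \<bullet> b)\<^sup>2)))"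
    for x :: 'a
  proof -
    have "(norm x)\<^sup>2 = (\<Sum>b\<in>Basis. (x \<bullet> b)\<^sup>2)"
      unfolding power2_norm_eq_inner by (subst euclidean_inner) (simp add: power2_eq_square)
    then show ?thesis by (simp add: sum_distrib_left exp_sum prod_ennreal)
  qed
  have "(\<integral>\<^sup>+x. ennreal (exp (- \<beta> * (norm x)\<^sup>2)) \<partial>(lborel :: 'a measure))
      = (\<Prod>b\<in>(Basis :: 'a set). \<integral>\<^sup>+x. ennreal (exp (- \<beta> * x\<^sup>2)) \<partial>lborel)"
    unfolding factor by (rule nn_integral_lborel_prod) auto
  also have "\<dots> < \<infinity>"
    using integrable_exp_neg_square[OF assms]
    by (simp add: integrable_iff_bounded power_less_top_ennreal)
  finally show "(\<integral>\<^sup>+x. ennreal (exp (- \<beta> * (norm x)\<^sup>2)) \<partial>(lborel :: 'a measure)) < \<infinity>" .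
qed auto

lemma one_plus_power_le_exp_square:
  fixes r \<beta> :: real
  assumes "r \<ge> 0" "\<beta> > 0"
  shows "(1 + r) ^ n \<le> exp ((real n)\<^sup>2 / (4 * \<beta>)) * exp (\<beta> * r\<^sup>2)"
proof -
  have "(1 + r) ^ n \<le> exp r ^ n"
    using assms by (intro power_mono exp_ge_add_one_self) auto
  also have "\<dots> = exp (n * r)"
    by (simp add: exp_of_nat_mult)
  also have "n * r \<le> (real n)\<^sup>2 / (4 * \<beta>) + \<beta> * r\<^sup>2"
  proof -
    have "0 \<le> (n / 2 - \<beta> * r)\<^sup>2" by simp
    then have "\<beta> * (n * r) \<le> (real n)\<^sup>2 / 4 + \<beta> * (\<beta> * r\<^sup>2)"
      by (simp add: power2_eq_square algebra_simps)
    then show ?thesis using assms by (simp add: field_simps)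
  qed
  finally show ?thesis by (simp add: exp_add)
qed

lemma integrable_gaussian_envelope:
  fixes f :: "'a::euclidean_space \<Rightarrow> 'b::{banach, second_countable_topology}"
  assumes f: "f \<in> borel_measurable lborel" and "c > 0"
    and bound: "\<And>x. norm (f x) \<le> C * (1 + norm x) ^ n * exp (- (norm x)\<^sup>2 / c)"
  shows "integrable lborel f"
proof (rule Bochner_Integration.integrable_bound[OF _ f])
  define \<beta> where "\<beta> = 1 / (2 * c)"
  have "\<beta> > 0" using \<open>c > 0\<close> by (simp add: \<beta>_def)
  show "integrable lborel (\<lambda>x::'a. \<bar>C\<bar> * exp ((real n)\<^sup>2 / (4 * \<beta>)) * exp (- \<beta> * (norm x)\<^sup>2))"
    using integrable_exp_neg_norm_square[OF \<open>\<beta> > 0\<close>] by (rule integrable_mult_right)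
  show "AE x in lborel. norm (f x)
      \<le> norm (\<bar>C\<bar> * exp ((real n)\<^sup>2 / (4 * \<beta>)) * exp (- \<beta> * (norm x)\<^sup>2))"
  proof (rule AE_I2)
    fix x :: 'a
    have "norm (f x) \<le> C * ((1 + norm x) ^ n * exp (- (norm x)\<^sup>2 / c))"
      using bound[of x] by (simp add: mult.assoc)
    also have "\<dots> \<le> \<bar>C\<bar> * ((1 + norm x) ^ n * exp (- (norm x)\<^sup>2 / c))"
      by (intro mult_right_mono) auto
    also have "\<dots> \<le> \<bar>C\<bar> * (exp ((real n)\<^sup>2 / (4 * \<beta>)) * exp (\<beta> * (norm x)\<^sup>2)
        * exp (- (norm x)\<^sup>2 / c))"
      using one_plus_power_le_exp_square[OF norm_ge_zero \<open>\<beta> > 0\<close>, of x n]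
      by (intro mult_left_mono mult_right_mono) auto
    also have "\<dots> = \<bar>C\<bar> * exp ((real n)\<^sup>2 / (4 * \<beta>)) * exp (- \<beta> * (norm x)\<^sup>2)"
      using \<open>c > 0\<close> by (simp add: \<beta>_def field_simps flip: exp_add)
    finally show "norm (f x)
        \<le> norm (\<bar>C\<bar> * exp ((real n)\<^sup>2 / (4 * \<beta>)) * exp (- \<beta> * (norm x)\<^sup>2))"
      by simp
  qed
qed

lemma has_real_derivative_integral_lipschitz:
  fixes f :: "real \<Rightarrow> 'a \<Rightarrow> real"
  assumes int: "\<And>s. integrable M (f s)"
    and f'_meas: "f' \<in> borel_measurable M"
    and deriv: "\<And>x. ((\<lambda>s. f s x) has_real_derivative f' x) (at t)"
    and g: "integrable M g"
    and lipschitz: "\<forall>\<^sub>F s in at t. \<forall>x. \<bar>f s x - f t x\<bar> \<le> \<bar>s - t\<bar> * g x"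
  shows "((\<lambda>s. integral\<^sup>L M (f s)) has_real_derivative integral\<^sup>L M f') (at t)"
proof -
  define Q where "Q s x = (f s x - f t x) / (s - t)" for s x
  have "((\<lambda>s. integral\<^sup>L M (Q s)) \<longlongrightarrow> integral\<^sup>L M f') (at t)"
    unfolding tendsto_at_iff_sequentially comp_def
  proof (intro allI impI)
    fix X :: "nat \<Rightarrow> real" assume "\<forall>n. X n \<in> UNIV - {t}" "X \<longlonglongrightarrow> t"
    then have X: "filterlim X (at t) sequentially"
      by (simp add: filterlim_at)
    have bound: "\<forall>\<^sub>F s in at t. \<forall>x. norm (Q s x) \<le> g x"
      using lipschitz eventually_neq_at_within[of t t UNIV]
      by eventually_elim (auto simp: Q_def abs_divide divide_le_eq mult.commute)
    obtain n0 where n0: "\<And>n. n \<ge> n0 \<Longrightarrow> \<forall>x. norm (Q (X n) x) \<le> g x"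
      using filterlim_iff[THEN iffD1, OF X, rule_format, OF bound]
      by (auto simp: eventually_sequentially)
    have "(\<lambda>n. integral\<^sup>L M (Q (X (n + n0)))) \<longlonglongrightarrow> integral\<^sup>L M f'"
    proof (rule integral_dominated_convergence[OF f'_meas _ g])
      show "Q (X (n + n0)) \<in> borel_measurable M" for n
        using int unfolding Q_def by measurable
      show "AE x in M. (\<lambda>n. Q (X (n + n0)) x) \<longlonglongrightarrow> f' x"
      proof (rule AE_I2)
        fix x
        have "((\<lambda>s. Q s x) \<longlongrightarrow> f' x) (at t)"
          using deriv[of x] by (simp add: has_field_derivative_iff Q_def)
        then show "(\<lambda>n. Q (X (n + n0)) x) \<longlonglongrightarrow> f' x"
          by (intro LIMSEQ_ignore_initial_segment filterlim_compose[OF _ X])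
      qed
      show "AE x in M. norm (Q (X (n + n0)) x) \<le> g x" for n
        using n0[of "n + n0"] by simp
    qed
    then show "(\<lambda>n. integral\<^sup>L M (Q (X n))) \<longlonglongrightarrow> integral\<^sup>L M f'"
      by (rule LIMSEQ_offset)
  qed
  moreover have "integral\<^sup>L M (Q s) = (integral\<^sup>L M (f s) - integral\<^sup>L M (f t)) / (s - t)" for s
    using int by (simp add: Q_def[abs_def])
  ultimately show ?thesis
    by (simp add: has_field_derivative_iff)
qed

lemma has_vector_derivative_imp_eventually_lipschitz:
  fixes f :: "real \<Rightarrow> 'a::real_normed_vector"
  assumes "(f has_vector_derivative f') (at t)"
  shows "\<forall>\<^sub>F s in at t. norm (f s - f t) \<le> (norm f' + 1) * \<bar>s - t\<bar>"
proof -
  obtain d where "d > 0" and d: "\<And>s. 0 < norm (s - t) \<Longrightarrow> norm (s - t) < d \<Longrightarrow>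
      norm (f s - f t - (s - t) *\<^sub>R f') / norm (s - t) < 1"
    using assms unfolding has_vector_derivative_def has_derivative_at' by (meson zero_less_one)
  show ?thesis
    unfolding eventually_at
  proof (intro exI conjI ballI impI)
    fix s assume "s \<noteq> t \<and> dist s t < d"
    then have "norm (f s - f t - (s - t) *\<^sub>R f') < \<bar>s - t\<bar>"
      using d[of s] by (simp add: dist_norm divide_less_eq)
    then have "norm (f s - f t) \<le> \<bar>s - t\<bar> * norm f' + \<bar>s - t\<bar>"
      using norm_triangle_ineq2[of "f s - f t" "(s - t) *\<^sub>R f'"] by simp
    then show "norm (f s - f t) \<le> (norm f' + 1) * \<bar>s - t\<bar>"
      by (simp add: algebra_simps)
  qed (rule \<open>d > 0\<close>)
qed

lemma xlnx_lipschitz: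
  fixes u v :: real
  assumes "u > 0" "v > 0"
  shows "\<bar>u * ln u - v * ln v\<bar> \<le> \<bar>u - v\<bar> * (1 + \<bar>ln u\<bar> + \<bar>ln v\<bar>)"
proof -
  let ?S = "{min u v..max u v}"
  have "norm (u * ln u - v * ln v) \<le> (1 + \<bar>ln u\<bar> + \<bar>ln v\<bar>) * norm (u - v)"
  proof (rule field_differentiable_bound[where f' = "\<lambda>z. ln z + 1"])
    fix z assume z: "z \<in> ?S"
    then have "z > 0" using assms by auto
    then show "((\<lambda>z. z * ln z) has_field_derivative ln z + 1) (at z within ?S)"
      by (auto intro!: derivative_eq_intros)
    have "ln (min u v) \<le> ln z" "ln z \<le> ln (max u v)"
      using z \<open>z > 0\<close> assms by auto
    then show "norm (ln z + 1) \<le> 1 + \<bar>ln u\<bar> + \<bar>ln v\<bar>"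
      by (auto simp: min_def max_def split: if_splits)
  qed auto
  then show ?thesis by (simp add: mult.commute)
qed

lemma integral_lborel_reflect:
  fixes f :: "'a::euclidean_space \<Rightarrow> 'b::{banach, second_countable_topology}"
  assumes [measurable]: "f \<in> borel_measurable borel"
  shows "integral\<^sup>L lborel f = integral\<^sup>L lborel (\<lambda>y. f (t - y))"
proof -
  have "(lborel :: 'a measure) = distr lborel borel (\<lambda>x. t + (-1::real) *\<^sub>R x)"
    using lborel_affine[of "-1::real" t] by (simp add: density_1)
  then have "integral\<^sup>L lborel f = integral\<^sup>L (distr lborel borel (\<lambda>x. t + (-1::real) *\<^sub>R x)) f"
    by simp
  also have "\<dots> = integral\<^sup>L lborel (\<lambda>y. f (t - y))"
    by (subst integral_distr) auto
  finally show ?thesis .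
qed

lemma integral_odd_shift_eq_0:
  fixes f :: "'a::euclidean_space \<Rightarrow> 'b::{banach, second_countable_topology}"
  assumes [measurable]: "f \<in> borel_measurable borel" and odd: "\<And>x. f (- x) = - f x"
  shows "(\<integral>y. f (y - a) \<partial>lborel) = 0"
proof -
  have "(\<integral>y. f (y - a) \<partial>lborel) = (\<integral>y. f (2 *\<^sub>R a - y - a) \<partial>lborel)"
    by (rule integral_lborel_reflect) measurable
  also have "\<dots> = - (\<integral>y. f (y - a) \<partial>lborel)"
    using odd[of "y - a" for y] by (simp add: scaleR_2 algebra_simps)
  finally have "2 *\<^sub>R (\<integral>y. f (y - a) \<partial>lborel) = 0"
    by (simp add: scaleR_2 eq_neg_iff_add_eq_0)
  then show ?thesis by simp
qed

lemma norm_square_has_real_derivative: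
  assumes "(f has_vector_derivative f') (at t)"
  shows "((\<lambda>s. (norm (f s))\<^sup>2) has_real_derivative 2 * (f t \<bullet> f')) (at t)"
  using bounded_bilinear.has_vector_derivative[OF bounded_bilinear_inner assms assms]
  by (simp add: power2_norm_eq_inner has_real_derivative_iff_has_vector_derivative inner_commute)

lemma norm_square_le_shift:
  "(norm (x::'a::real_normed_vector))\<^sup>2 \<le> 2 * (norm (x - p))\<^sup>2 + 2 * (norm p)\<^sup>2"
proof -
  have "norm x \<le> norm (x - p) + norm p"
    by (metis diff_add_cancel norm_triangle_ineq)
  then have "(norm x)\<^sup>2 \<le> (norm (x - p) + norm p)\<^sup>2"
    by (simp add: power_mono)
  also have "\<dots> \<le> 2 * (norm (x - p))\<^sup>2 + 2 * (norm p)\<^sup>2"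
    using zero_le_power2[of "norm (x - p) - norm p"] by (simp add: power2_eq_square algebra_simps)
  finally show ?thesis .
qed

section \<open>The Gaussian mollifier\<close>

lemma psi_eq: "psi \<epsilon> (x::real^'n) = psi \<epsilon> (0::real^'n) * exp (- (norm x)\<^sup>2 / (2 * \<epsilon>))"
  by (simp add: psi_def)

lemma psi_pos: "\<epsilon> > 0 \<Longrightarrow> psi \<epsilon> x > 0"
  by (simp add: psi_def)

lemma psi_minus_commute: "psi \<epsilon> (a - b) = psi \<epsilon> (b - a)"
  by (simp add: psi_def norm_minus_commute)

lemma psi_measurable [measurable]: "psi \<epsilon> \<in> borel_measurable borel"
  unfolding psi_def by measurable

lemma psi_has_derivative:
  fixes x :: "real^'n"
  assumes "\<epsilon> > 0"
  shows "(psi \<epsilon> has_derivative (\<lambda>h. (- (psi \<epsilon> x / \<epsilon>) *\<^sub>R x) \<bullet> h)) (at x)"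
proof -
  let ?c = "psi \<epsilon> (0::real^'n)"
  have psi: "psi \<epsilon> = (\<lambda>y::real^'n. ?c * exp (- (y \<bullet> y) / (2 * \<epsilon>)))"
    by (intro ext, subst psi_eq) (simp add: power2_norm_eq_inner)
  have "((\<lambda>y. ?c * exp (- (y \<bullet> y) / (2 * \<epsilon>))) has_derivative
      (\<lambda>h. ?c * (exp (- (x \<bullet> x) / (2 * \<epsilon>)) * (- (x \<bullet> h + h \<bullet> x) / (2 * \<epsilon>))))) (at x)"
    using assms by (auto intro!: derivative_eq_intros simp: field_simps)
  also have "(\<lambda>h. ?c * (exp (- (x \<bullet> x) / (2 * \<epsilon>)) * (- (x \<bullet> h + h \<bullet> x) / (2 * \<epsilon>))))
      = (\<lambda>h. (- (psi \<epsilon> x / \<epsilon>) *\<^sub>R x) \<bullet> h)"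
    using assms by (auto simp: psi_eq[of \<epsilon> x] power2_norm_eq_inner inner_commute field_simps)
  finally show ?thesis by (simp only: psi[symmetric])
qed

lemma grad_psi_eq:
  assumes "\<epsilon> > 0"
  shows "grad_psi \<epsilon> x = (- (psi \<epsilon> x / \<epsilon>)) *\<^sub>R x"
  unfolding grad_psi_def
proof (rule the_equality)
  fix g assume "(psi \<epsilon> has_derivative (\<lambda>h. g \<bullet> h)) (at x)"
  from has_derivative_unique[OF this psi_has_derivative[OF assms]]
  have "g \<bullet> h = (- (psi \<epsilon> x / \<epsilon>) *\<^sub>R x) \<bullet> h" for h
    by metis
  then show "g = (- (psi \<epsilon> x / \<epsilon>)) *\<^sub>R x"
    by (metis vector_eq_rdot)
qed (rule psi_has_derivative[OF assms])

context
  fixes \<epsilon> :: real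
  assumes eps: "\<epsilon> > 0"
begin

lemma psi_le_psi_0: "psi \<epsilon> (x::real^'n) \<le> psi \<epsilon> (0::real^'n)"
proof -
  have "exp (- (norm x)\<^sup>2 / (2 * \<epsilon>)) \<le> 1"
    using eps by simp
  then show ?thesis
    using psi_pos[OF eps, of "0::real^'n"] by (subst psi_eq[of \<epsilon> x], intro mult_right_le_one_le) auto
qed

lemma psi_shift_le:
  fixes p :: "real^'n"
  assumes "norm p \<le> R"
  shows "psi \<epsilon> (y - p) \<le> psi \<epsilon> (0::real^'n) * exp (R\<^sup>2 / (2 * \<epsilon>)) * exp (- (norm y)\<^sup>2 / (4 * \<epsilon>))"
proof -
  have "(norm p)\<^sup>2 \<le> R\<^sup>2"
    using assms by (simp add: power_mono)
  with norm_square_le_shift[of y p]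
  have "- (norm (y - p))\<^sup>2 / (2 * \<epsilon>) \<le> R\<^sup>2 / (2 * \<epsilon>) + - (norm y)\<^sup>2 / (4 * \<epsilon>)"
    using eps by (simp add: field_simps)
  then have "exp (- (norm (y - p))\<^sup>2 / (2 * \<epsilon>))
      \<le> exp (R\<^sup>2 / (2 * \<epsilon>)) * exp (- (norm y)\<^sup>2 / (4 * \<epsilon>))"
    by (simp flip: exp_add)
  then show ?thesis
    using psi_pos[OF eps, of "0::real^'n"]
    by (subst psi_eq[of \<epsilon> "y - p"], unfold mult.assoc, intro mult_left_mono) auto
qed

lemma psi_shift_ge:
  fixes p :: "real^'n"
  assumes "norm p \<le> R"
  shows "psi \<epsilon> (0::real^'n) * exp (- ((norm y)\<^sup>2 + R\<^sup>2) / \<epsilon>) \<le> psi \<epsilon> (y - p)"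
proof -
  have "(norm p)\<^sup>2 \<le> R\<^sup>2"
    using assms by (simp add: power_mono)
  with norm_square_le_shift[of "y - p" "- p"]
  have "(norm (y - p))\<^sup>2 / (2 * \<epsilon>) \<le> 2 * ((norm y)\<^sup>2 + R\<^sup>2) / (2 * \<epsilon>)"
    using eps by (intro divide_right_mono) auto
  then have "exp (- ((norm y)\<^sup>2 + R\<^sup>2) / \<epsilon>) \<le> exp (- (norm (y - p))\<^sup>2 / (2 * \<epsilon>))"
    by (simp add: add_divide_distrib diff_divide_distrib)
  then show ?thesis
    using psi_pos[OF eps, of "0::real^'n"] by (subst psi_eq[of \<epsilon> "y - p"], intro mult_left_mono) auto
qed

lemma psi_shift_lipschitz:
  fixes a b :: "real^'n"
  assumes a: "norm a \<le> R" and b: "norm b \<le> R"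
  shows "\<bar>psi \<epsilon> (y - a) - psi \<epsilon> (y - b)\<bar>
    \<le> norm (a - b) * (psi \<epsilon> (0::real^'n) * exp (R\<^sup>2 / (2 * \<epsilon>)) * ((norm y + R) / \<epsilon>)
      * exp (- (norm y)\<^sup>2 / (4 * \<epsilon>)))"
    (is "_ \<le> _ * ?B")
proof -
  let ?g = "\<lambda>c. (psi \<epsilon> (y - c) / \<epsilon>) *\<^sub>R (y - c)"
  have "norm (psi \<epsilon> (y - a) - psi \<epsilon> (y - b)) \<le> ?B * norm (a - b)"
  proof (rule differentiable_bound[where S = "cball 0 R" and f' = "\<lambda>c h. ?g c \<bullet> h"])
    fix c assume "c \<in> cball (0::real^'n) R"
    then have c: "norm c \<le> R" by simp
    have "((\<lambda>c. y - c) has_derivative uminus) (at c)"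
      by (auto intro!: derivative_eq_intros)
    from has_derivative_compose[OF this psi_has_derivative[OF eps]]
    have "((\<lambda>c. psi \<epsilon> (y - c)) has_derivative (\<lambda>h. ?g c \<bullet> h)) (at c)"
      by simp
    then show "((\<lambda>c. psi \<epsilon> (y - c)) has_derivative (\<lambda>h. ?g c \<bullet> h)) (at c within cball 0 R)"
      by (rule has_derivative_at_withinI)
    have "onorm (\<lambda>h. ?g c \<bullet> h) \<le> norm (?g c)"
      using onorm_inner_right[OF bounded_linear_ident, of "?g c"] by (simp add: onorm_id)
    also have "\<dots> = psi \<epsilon> (y - c) / \<epsilon> * norm (y - c)"
      using eps psi_pos[OF eps, of "y - c"] by simp
    also have "\<dots> \<le> (psi \<epsilon> (0::real^'n) * exp (R\<^sup>2 / (2 * \<epsilon>)) * exp (- (norm y)\<^sup>2 / (4 * \<epsilon>)))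
        / \<epsilon> * (norm y + R)"
      using psi_shift_le[OF c, of y] norm_triangle_ineq4[of y c] c eps
        psi_pos[OF eps, of "y - c"] psi_pos[OF eps, of "0::real^'n"]
      by (intro mult_mono divide_right_mono) auto
    also have "\<dots> = ?B" by (simp add: field_simps)
    finally show "onorm (\<lambda>h. ?g c \<bullet> h) \<le> ?B" .
  qed (use a b in auto)
  then show ?thesis by (simp add: mult.commute)
qed

end

lemma integrable_psi_moment:
  fixes a u :: "real^'n"
  assumes "\<epsilon> > 0"
  shows "integrable lborel (\<lambda>y. psi \<epsilon> (y - a) / \<epsilon> * ((y - a) \<bullet> u))"
proof (rule integrable_gaussian_envelope)
  fix y :: "real^'n"
  let ?A = "psi \<epsilon> (0::real^'n) * exp ((norm a)\<^sup>2 / (2 * \<epsilon>)) / \<epsilon>"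
  have "norm (y - a) \<le> norm y + norm a"
    by (rule norm_triangle_ineq4)
  also have "\<dots> \<le> (1 + norm a) * (1 + norm y)"
    by (simp add: algebra_simps)
  finally have dist: "norm (y - a) \<le> (1 + norm a) * (1 + norm y)" .
  have "norm (psi \<epsilon> (y - a) / \<epsilon> * ((y - a) \<bullet> u)) = psi \<epsilon> (y - a) / \<epsilon> * \<bar>(y - a) \<bullet> u\<bar>"
    using psi_pos[OF assms, of "y - a"] assms by (simp add: abs_mult)
  also have "\<dots> \<le> psi \<epsilon> (y - a) / \<epsilon> * (norm (y - a) * norm u)"
    using psi_pos[OF assms, of "y - a"] assms by (intro mult_left_mono Cauchy_Schwarz_ineq2) auto
  also have "\<dots> \<le> (?A * exp (- (norm y)\<^sup>2 / (4 * \<epsilon>))) * ((1 + norm a) * (1 + norm y) * norm u)"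
    using psi_shift_le[OF assms order_refl, of y a] dist assms
      psi_pos[OF assms, of "y - a"] psi_pos[OF assms, of "0::real^'n"]
    by (intro mult_mono) (auto simp: field_simps)
  also have "\<dots> = ?A * (1 + norm a) * norm u * (1 + norm y) ^ 1 * exp (- (norm y)\<^sup>2 / (4 * \<epsilon>))"
    by (simp add: mult_ac)
  finally show "norm (psi \<epsilon> (y - a) / \<epsilon> * ((y - a) \<bullet> u))
      \<le> ?A * (1 + norm a) * norm u * (1 + norm y) ^ 1 * exp (- (norm y)\<^sup>2 / (4 * \<epsilon>))" .
qed (use assms in auto)

lemma integral_psi_moment_eq_0:
  fixes a u :: "real^'n"
  shows "(\<integral>y. psi \<epsilon> (y - a) / \<epsilon> * ((y - a) \<bullet> u) \<partial>lborel) = 0"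
  by (rule integral_odd_shift_eq_0[where f = "\<lambda>z. psi \<epsilon> z / \<epsilon> * (z \<bullet> u)"]) (auto simp: psi_def)

lemma psi_shift_has_real_derivative:
  assumes "\<epsilon> > 0" and "(p has_vector_derivative p') (at t)"
  shows "((\<lambda>s. psi \<epsilon> (y - p s)) has_real_derivative psi \<epsilon> (y - p t) / \<epsilon> * ((y - p t) \<bullet> p')) (at t)"
proof -
  have "((\<lambda>s. y - p s) has_derivative (\<lambda>h. h *\<^sub>R (- p'))) (at t)"
    using assms(2) unfolding has_vector_derivative_def by (auto intro!: derivative_eq_intros)
  from has_derivative_compose[OF this psi_has_derivative[OF assms(1)]]
  show ?thesis
    unfolding has_field_derivative_def by (rule has_derivative_eq_rhs) (auto simp: fun_eq_iff)
qed

section \<open>The collision matrix\<close>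

lemma Amat_mult_vec:
  "Amat \<gamma> z *v u = (norm z powr \<gamma>) *\<^sub>R ((norm z)\<^sup>2 *\<^sub>R u - (z \<bullet> u) *\<^sub>R z)"
proof -
  have "outer z z *v u = (z \<bullet> u) *\<^sub>R z"
    by (simp add: vec_eq_iff matrix_vector_mult_def outer_def inner_vec_def sum_distrib_left mult_ac)
  then show ?thesis
    by (simp add: Amat_def scaleR_matrix_vector_assoc[symmetric] matrix_vector_mult_diff_rdistrib)
qed

lemma Amat_minus: "Amat \<gamma> (- z) = Amat \<gamma> z"
  by (simp add: Amat_def outer_def)

lemma Amat_kernel: "z \<bullet> (Amat \<gamma> z *v u) = 0"
  by (simp add: Amat_mult_vec inner_diff_right power2_norm_eq_inner inner_commute)

lemma Amat_nonneg: "u \<bullet> (Amat \<gamma> z *v u) \<ge> 0"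
proof -
  have "(z \<bullet> u)\<^sup>2 \<le> (norm z)\<^sup>2 * (norm u)\<^sup>2"
    using Cauchy_Schwarz_ineq2[of z u] by (metis abs_ge_zero power2_abs power_mono power_mult_distrib)
  moreover have "u \<bullet> (Amat \<gamma> z *v u) = norm z powr \<gamma> * ((norm z)\<^sup>2 * (norm u)\<^sup>2 - (z \<bullet> u)\<^sup>2)"
    by (simp add: Amat_mult_vec inner_diff_right power2_norm_eq_inner inner_commute algebra_simps
        power2_eq_square[of "u \<bullet> z"])
  ultimately show ?thesis
    by simp
qed

lemma sum_pairs_symmetric:
  fixes f :: "'i \<Rightarrow> 'i \<Rightarrow> 'a::real_vector"
  shows "(\<Sum>i\<in>I. \<Sum>j\<in>I. f i j) = (1/2) *\<^sub>R (\<Sum>i\<in>I. \<Sum>j\<in>I. f i j + f j i)"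
  by (simp add: sum.distrib sum.swap[of f] flip: scaleR_2)

lemma sum_weighted_antisymmetric_eq_0:
  fixes c :: "'i \<Rightarrow> 'i \<Rightarrow> 'a::real_vector"
  assumes antisym: "\<And>i j. c j i = - c i j"
  shows "(\<Sum>i\<in>I. w i *\<^sub>R (\<Sum>j\<in>I. w j *\<^sub>R c i j)) = 0"
proof -
  have "(\<Sum>i\<in>I. w i *\<^sub>R (\<Sum>j\<in>I. w j *\<^sub>R c i j)) = (\<Sum>i\<in>I. \<Sum>j\<in>I. (w i * w j) *\<^sub>R c i j)"
    by (simp add: scaleR_sum_right)
  also have "\<dots> = 0"
  proof -
    have "(w i * w j) *\<^sub>R c i j + (w j * w i) *\<^sub>R c j i = 0" for i j
      using antisym[of i j] by (simp add: mult.commute)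
    then show ?thesis by (subst sum_pairs_symmetric) simp
  qed
  finally show ?thesis .
qed

lemma sum_weighted_inner_antisymmetric:
  fixes c :: "'i \<Rightarrow> 'i \<Rightarrow> 'a::real_inner" and a :: "'i \<Rightarrow> 'a"
  assumes antisym: "\<And>i j. c j i = - c i j"
  shows "(\<Sum>i\<in>I. w i * (a i \<bullet> (\<Sum>j\<in>I. w j *\<^sub>R c i j)))
    = 1/2 * (\<Sum>i\<in>I. \<Sum>j\<in>I. w i * w j * ((a i - a j) \<bullet> c i j))"
proof -
  have "(\<Sum>i\<in>I. w i * (a i \<bullet> (\<Sum>j\<in>I. w j *\<^sub>R c i j)))
      = (\<Sum>i\<in>I. \<Sum>j\<in>I. w i * w j * (a i \<bullet> c i j))"
    by (simp add: inner_sum_right sum_distrib_left mult.assoc)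
  also have "\<dots> = 1/2 * (\<Sum>i\<in>I. \<Sum>j\<in>I. w i * w j * (a i \<bullet> c i j) + w j * w i * (a j \<bullet> c j i))"
    using sum_pairs_symmetric[of "\<lambda>i j. w i * w j * (a i \<bullet> c i j)" I] by simp
  also have "\<dots> = 1/2 * (\<Sum>i\<in>I. \<Sum>j\<in>I. w i * w j * ((a i - a j) \<bullet> c i j))"
  proof -
    have "w i * w j * (a i \<bullet> c i j) + w j * w i * (a j \<bullet> c j i) = w i * w j * ((a i - a j) \<bullet> c i j)"
      for i j
      using antisym[of i j] by (simp add: inner_diff_left algebra_simps)
    then show ?thesis by simp
  qed
  finally show ?thesis .
qed

lemma Amat_mult_vec_swap: "Amat \<gamma> (b - a) *v (d - c) = - (Amat \<gamma> (a - b) *v (c - d))"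
  using Amat_minus[of \<gamma> "a - b"] by (simp add: matrix_vector_mult_diff_distrib)

lemma sum_collision_momentum_eq_0:
  "(\<Sum>i\<in>I. w i *\<^sub>R (\<Sum>j\<in>I. w j *\<^sub>R (Amat \<gamma> (x i - x j) *v (G i - G j)))) = 0"
  by (rule sum_weighted_antisymmetric_eq_0) (rule Amat_mult_vec_swap)

lemma sum_collision_energy_eq_0:
  "(\<Sum>i\<in>I. w i * (x i \<bullet> (\<Sum>j\<in>I. w j *\<^sub>R (Amat \<gamma> (x i - x j) *v (G i - G j))))) = 0"
proof -
  have "(\<Sum>i\<in>I. w i * (x i \<bullet> (\<Sum>j\<in>I. w j *\<^sub>R (Amat \<gamma> (x i - x j) *v (G i - G j)))))
    = 1/2 * (\<Sum>i\<in>I. \<Sum>j\<in>I. w i * w j * ((x i - x j) \<bullet> (Amat \<gamma> (x i - x j) *v (G i - G j))))"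
    by (rule sum_weighted_inner_antisymmetric) (rule Amat_mult_vec_swap)
  also have "\<dots> = 0"
    by (simp add: Amat_kernel)
  finally show ?thesis .
qed

lemma sum_collision_entropy_eq:
  "(\<Sum>i\<in>I. w i * (G i \<bullet> (\<Sum>j\<in>I. w j *\<^sub>R (Amat \<gamma> (x i - x j) *v (G i - G j)))))
    = 1/2 * (\<Sum>i\<in>I. \<Sum>j\<in>I. w i * w j * ((G i - G j) \<bullet> (Amat \<gamma> (x i - x j) *v (G i - G j))))"
  by (rule sum_weighted_inner_antisymmetric) (rule Amat_mult_vec_swap)

section \<open>Gaussian mixtures and the entropy\<close>

definition gauss_mixture :: "real \<Rightarrow> nat \<Rightarrow> (nat \<Rightarrow> real) \<Rightarrow> (nat \<Rightarrow> real^'n) \<Rightarrow> real^'n \<Rightarrow> real"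
  where "gauss_mixture \<epsilon> N w p y = (\<Sum>k<N. w k * psi \<epsilon> (y - p k))"

lemma mollified_eq_gauss_mixture: "mollified \<epsilon> N w v t = gauss_mixture \<epsilon> N w (\<lambda>k. v k t)"
  by (simp add: fun_eq_iff mollified_def gauss_mixture_def)

lemma gauss_mixture_measurable [measurable]: "gauss_mixture \<epsilon> N w p \<in> borel_measurable borel"
  unfolding gauss_mixture_def by measurable

lemma gradE_eq:
  assumes "\<epsilon> > 0"
  shows "gradE \<epsilon> N w v t x
    = (\<integral>y. ln (gauss_mixture \<epsilon> N w (\<lambda>k. v k t) y) *\<^sub>R ((psi \<epsilon> (y - x) / \<epsilon>) *\<^sub>R (y - x)) \<partial>lborel)"
proof -
  have "grad_psi \<epsilon> (x - y) = (psi \<epsilon> (y - x) / \<epsilon>) *\<^sub>R (y - x)" for y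
    using grad_psi_eq[OF assms, of "x - y"] psi_minus_commute[of \<epsilon> x y] by (simp add: algebra_simps)
  then show ?thesis
    by (simp add: gradE_def mollified_eq_gauss_mixture)
qed

locale gauss_mixture_weights =
  fixes \<epsilon> :: real and N :: nat and w :: "nat \<Rightarrow> real"
  assumes eps_pos: "\<epsilon> > 0" and N_pos: "N > 0" and w_pos: "\<And>k. k < N \<Longrightarrow> w k > 0"
begin

lemma gauss_mixture_pos: "gauss_mixture \<epsilon> N w p (y::real^'n) > 0"
  unfolding gauss_mixture_def using N_pos by (intro sum_pos mult_pos_pos w_pos psi_pos[OF eps_pos]) auto

lemma gauss_mixture_le: "gauss_mixture \<epsilon> N w p (y::real^'n) \<le> sum w {..<N} * psi \<epsilon> (0::real^'n)"
  unfolding gauss_mixture_def sum_distrib_right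
  using w_pos by (intro sum_mono mult_left_mono psi_le_psi_0[OF eps_pos]) (auto intro: less_imp_le)

lemma gauss_mixture_le_gaussian:
  fixes p :: "nat \<Rightarrow> real^'n"
  assumes "\<And>k. k < N \<Longrightarrow> norm (p k) \<le> R"
  shows "gauss_mixture \<epsilon> N w p y
    \<le> sum w {..<N} * (psi \<epsilon> (0::real^'n) * exp (R\<^sup>2 / (2 * \<epsilon>)) * exp (- (norm y)\<^sup>2 / (4 * \<epsilon>)))"
  unfolding gauss_mixture_def sum_distrib_right
  using w_pos by (intro sum_mono mult_left_mono psi_shift_le[OF eps_pos assms]) (auto intro: less_imp_le)

lemma gauss_mixture_ge:
  fixes p :: "nat \<Rightarrow> real^'n"
  assumes "\<And>k. k < N \<Longrightarrow> norm (p k) \<le> R"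
  shows "w 0 * psi \<epsilon> (0::real^'n) * exp (- ((norm y)\<^sup>2 + R\<^sup>2) / \<epsilon>) \<le> gauss_mixture \<epsilon> N w p y"
proof -
  have "w 0 * psi \<epsilon> (0::real^'n) * exp (- ((norm y)\<^sup>2 + R\<^sup>2) / \<epsilon>) \<le> w 0 * psi \<epsilon> (y - p 0)"
    using psi_shift_ge[OF eps_pos assms[OF N_pos], of y] w_pos[OF N_pos]
    by (simp add: mult.assoc)
  also have "\<dots> \<le> gauss_mixture \<epsilon> N w p y"
    unfolding gauss_mixture_def using N_pos
    by (intro member_le_sum[of 0 "{..<N}" "\<lambda>k. w k * psi \<epsilon> (y - p k)"] mult_nonneg_nonneg
        less_imp_le[OF w_pos] less_imp_le[OF psi_pos[OF eps_pos]]) auto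
  finally show ?thesis .
qed

lemma abs_ln_gauss_mixture_le:
  obtains C where "\<And>(p :: nat \<Rightarrow> real^'n) y. (\<And>k. k < N \<Longrightarrow> norm (p k) \<le> R) \<Longrightarrow>
    \<bar>ln (gauss_mixture \<epsilon> N w p y)\<bar> \<le> C * (1 + norm y)\<^sup>2"
proof -
  define c where "c = psi \<epsilon> (0::real^'n)"
  define K where "K = \<bar>ln (w 0 * c)\<bar> + R\<^sup>2 / \<epsilon> + \<bar>ln (sum w {..<N} * c)\<bar>"
  have "c > 0" "w 0 > 0" "K \<ge> 0"
    using psi_pos[OF eps_pos] w_pos[OF N_pos] eps_pos by (simp_all add: c_def K_def)
  have "\<bar>ln (gauss_mixture \<epsilon> N w p y)\<bar> \<le> (K + 1 / \<epsilon>) * (1 + norm y)\<^sup>2"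
    if bounded: "\<And>k. k < N \<Longrightarrow> norm (p k) \<le> R" for p :: "nat \<Rightarrow> real^'n" and y
  proof -
    let ?m = "gauss_mixture \<epsilon> N w p y"
    have "ln (w 0 * c) - ((norm y)\<^sup>2 + R\<^sup>2) / \<epsilon> = ln (w 0 * c * exp (- ((norm y)\<^sup>2 + R\<^sup>2) / \<epsilon>))"
      using \<open>c > 0\<close> \<open>w 0 > 0\<close> eps_pos by (simp add: ln_mult field_simps)
    also have "\<dots> \<le> ln ?m"
      using gauss_mixture_ge[of p, OF bounded, of y] gauss_mixture_pos[of p y] \<open>c > 0\<close> \<open>w 0 > 0\<close>
      unfolding c_def by (subst ln_le_cancel_iff) auto
    finally have lower: "ln (w 0 * c) - ((norm y)\<^sup>2 + R\<^sup>2) / \<epsilon> \<le> ln ?m" .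
    have upper: "ln ?m \<le> ln (sum w {..<N} * c)"
      using gauss_mixture_le[of p y] gauss_mixture_pos[of p y] unfolding c_def by simp
    have "(norm y)\<^sup>2 / \<epsilon> \<ge> 0" "R\<^sup>2 / \<epsilon> \<ge> 0"
      using eps_pos by simp_all
    then have "\<bar>ln ?m\<bar> \<le> K + (norm y)\<^sup>2 / \<epsilon>"
      using lower upper abs_ge_self[of "ln (w 0 * c)"] abs_ge_minus_self[of "ln (w 0 * c)"]
        abs_ge_self[of "ln (sum w {..<N} * c)"] abs_ge_minus_self[of "ln (sum w {..<N} * c)"]
      unfolding K_def add_divide_distrib by linarith
    also have "\<dots> \<le> K * (1 + norm y)\<^sup>2 + (1 + norm y)\<^sup>2 / \<epsilon>"
    proof (intro add_mono divide_right_mono)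
      show "K \<le> K * (1 + norm y)\<^sup>2"
        using \<open>K \<ge> 0\<close> mult_left_mono[of 1 "(1 + norm y)\<^sup>2" K] by (simp add: one_le_power)
    qed (use eps_pos in \<open>auto intro: power_mono\<close>)
    finally show ?thesis by (simp add: algebra_simps)
  qed
  then show ?thesis by (rule that)
qed

lemma gauss_mixture_lipschitz:
  obtains C where "\<And>(p :: nat \<Rightarrow> real^'n) q y \<delta>. (\<And>k. k < N \<Longrightarrow> norm (p k) \<le> R) \<Longrightarrow>
    (\<And>k. k < N \<Longrightarrow> norm (q k) \<le> R) \<Longrightarrow> (\<And>k. k < N \<Longrightarrow> norm (p k - q k) \<le> \<delta>) \<Longrightarrow>
    \<bar>gauss_mixture \<epsilon> N w p y - gauss_mixture \<epsilon> N w q y\<bar>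
      \<le> \<delta> * (C * (1 + norm y) * exp (- (norm y)\<^sup>2 / (4 * \<epsilon>)))"
proof -
  define C where "C = sum w {..<N} * psi \<epsilon> (0::real^'n) * exp (R\<^sup>2 / (2 * \<epsilon>)) * ((1 + R) / \<epsilon>)"
  have "\<bar>gauss_mixture \<epsilon> N w p y - gauss_mixture \<epsilon> N w q y\<bar>
      \<le> \<delta> * (C * (1 + norm y) * exp (- (norm y)\<^sup>2 / (4 * \<epsilon>)))"
    if p: "\<And>k. k < N \<Longrightarrow> norm (p k) \<le> R" and q: "\<And>k. k < N \<Longrightarrow> norm (q k) \<le> R"
      and pq: "\<And>k. k < N \<Longrightarrow> norm (p k - q k) \<le> \<delta>" for p q :: "nat \<Rightarrow> real^'n" and y \<delta>
  proof -
    have "R \<ge> 0"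
      using p[OF N_pos] norm_ge_zero order_trans by blast
    define B where "B = psi \<epsilon> (0::real^'n) * exp (R\<^sup>2 / (2 * \<epsilon>)) * ((1 + R) / \<epsilon>)
      * (1 + norm y) * exp (- (norm y)\<^sup>2 / (4 * \<epsilon>))"
    have summand: "\<bar>w k * (psi \<epsilon> (y - p k) - psi \<epsilon> (y - q k))\<bar> \<le> w k * (\<delta> * B)" if "k < N" for k
    proof -
      have "\<bar>psi \<epsilon> (y - p k) - psi \<epsilon> (y - q k)\<bar> \<le> norm (p k - q k) * (psi \<epsilon> (0::real^'n)
          * exp (R\<^sup>2 / (2 * \<epsilon>)) * ((norm y + R) / \<epsilon>) * exp (- (norm y)\<^sup>2 / (4 * \<epsilon>)))"
        by (rule psi_shift_lipschitz[OF eps_pos p[OF that] q[OF that]])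
      also have "\<dots> \<le> \<delta> * B"
      proof (intro mult_mono)
        let ?a = "psi \<epsilon> (0::real^'n) * exp (R\<^sup>2 / (2 * \<epsilon>))"
        let ?e = "exp (- (norm y)\<^sup>2 / (4 * \<epsilon>))"
        have "norm y + R \<le> (1 + R) * (1 + norm y)"
          using \<open>R \<ge> 0\<close> by (simp add: algebra_simps)
        then have "(norm y + R) / \<epsilon> \<le> (1 + R) / \<epsilon> * (1 + norm y)"
          using eps_pos by (simp add: divide_right_mono)
        then have "?a * ((norm y + R) / \<epsilon>) * ?e \<le> ?a * ((1 + R) / \<epsilon> * (1 + norm y)) * ?e"
          using psi_pos[OF eps_pos, of "0::real^'n"] by (intro mult_right_mono mult_left_mono) auto
        then show "?a * ((norm y + R) / \<epsilon>) * ?e \<le> B"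
          by (simp add: B_def mult.assoc)
      qed (use pq[OF that] order_trans[OF norm_ge_zero pq[OF that]] eps_pos
          psi_pos[OF eps_pos, of "0::real^'n"] \<open>R \<ge> 0\<close> in auto)
      finally show ?thesis
        using w_pos[OF that] by (simp add: abs_mult mult_left_mono)
    qed
    have "\<bar>gauss_mixture \<epsilon> N w p y - gauss_mixture \<epsilon> N w q y\<bar>
        = \<bar>\<Sum>k<N. w k * (psi \<epsilon> (y - p k) - psi \<epsilon> (y - q k))\<bar>"
      by (simp add: gauss_mixture_def right_diff_distrib sum_subtractf)
    also have "\<dots> \<le> (\<Sum>k<N. w k * (\<delta> * B))"
      using summand by (intro order_trans[OF sum_abs sum_mono]) auto
    also have "\<dots> = sum w {..<N} * (\<delta> * B)"
      by (rule sum_distrib_right[symmetric])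
    also have "\<dots> = \<delta> * (C * (1 + norm y) * exp (- (norm y)\<^sup>2 / (4 * \<epsilon>)))"
      by (simp add: B_def C_def mult_ac)
    finally show ?thesis .
  qed
  then show ?thesis by (rule that)
qed

lemma gauss_mixture_entropy_lipschitz:
  obtains C where "\<And>(p :: nat \<Rightarrow> real^'n) q y \<delta>. (\<And>k. k < N \<Longrightarrow> norm (p k) \<le> R) \<Longrightarrow>
    (\<And>k. k < N \<Longrightarrow> norm (q k) \<le> R) \<Longrightarrow> (\<And>k. k < N \<Longrightarrow> norm (p k - q k) \<le> \<delta>) \<Longrightarrow>
    \<bar>gauss_mixture \<epsilon> N w p y * ln (gauss_mixture \<epsilon> N w p y)
      - gauss_mixture \<epsilon> N w q y * ln (gauss_mixture \<epsilon> N w q y)\<bar>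
      \<le> \<delta> * (C * (1 + norm y) ^ 3 * exp (- (norm y)\<^sup>2 / (4 * \<epsilon>)))"
proof -
  obtain C\<^sub>1 where lip: "\<And>(p :: nat \<Rightarrow> real^'n) q y \<delta>. (\<And>k. k < N \<Longrightarrow> norm (p k) \<le> R) \<Longrightarrow>
    (\<And>k. k < N \<Longrightarrow> norm (q k) \<le> R) \<Longrightarrow> (\<And>k. k < N \<Longrightarrow> norm (p k - q k) \<le> \<delta>) \<Longrightarrow>
    \<bar>gauss_mixture \<epsilon> N w p y - gauss_mixture \<epsilon> N w q y\<bar>
      \<le> \<delta> * (C\<^sub>1 * (1 + norm y) * exp (- (norm y)\<^sup>2 / (4 * \<epsilon>)))"
    using gauss_mixture_lipschitz by blast
  obtain C\<^sub>2 where ln: "\<And>(p :: nat \<Rightarrow> real^'n) y. (\<And>k. k < N \<Longrightarrow> norm (p k) \<le> R) \<Longrightarrow>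
    \<bar>ln (gauss_mixture \<epsilon> N w p y)\<bar> \<le> C\<^sub>2 * (1 + norm y)\<^sup>2"
    using abs_ln_gauss_mixture_le by blast
  have "\<bar>gauss_mixture \<epsilon> N w p y * ln (gauss_mixture \<epsilon> N w p y)
      - gauss_mixture \<epsilon> N w q y * ln (gauss_mixture \<epsilon> N w q y)\<bar>
      \<le> \<delta> * (C\<^sub>1 * (1 + 2 * C\<^sub>2) * (1 + norm y) ^ 3 * exp (- (norm y)\<^sup>2 / (4 * \<epsilon>)))"
    if p: "\<And>k. k < N \<Longrightarrow> norm (p k) \<le> R" and q: "\<And>k. k < N \<Longrightarrow> norm (q k) \<le> R"
      and pq: "\<And>k. k < N \<Longrightarrow> norm (p k - q k) \<le> \<delta>" for p q :: "nat \<Rightarrow> real^'n" and y \<delta>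
  proof -
    let ?mp = "gauss_mixture \<epsilon> N w p y" and ?mq = "gauss_mixture \<epsilon> N w q y"
    let ?L = "\<delta> * (C\<^sub>1 * (1 + norm y) * exp (- (norm y)\<^sup>2 / (4 * \<epsilon>)))"
    have L: "\<bar>?mp - ?mq\<bar> \<le> ?L"
      using lip[of p q \<delta> y, OF p q pq] .
    have "1 \<le> (1 + norm y)\<^sup>2"
      by (simp add: one_le_power)
    have "\<bar>?mp * ln ?mp - ?mq * ln ?mq\<bar> \<le> \<bar>?mp - ?mq\<bar> * (1 + \<bar>ln ?mp\<bar> + \<bar>ln ?mq\<bar>)"
      using gauss_mixture_pos by (intro xlnx_lipschitz)
    also have "\<dots> \<le> ?L * (1 + 2 * C\<^sub>2 * (1 + norm y)\<^sup>2)"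
      using L ln[of p y, OF p] ln[of q y, OF q] by (intro mult_mono) auto
    also have "\<dots> \<le> ?L * ((1 + 2 * C\<^sub>2) * (1 + norm y)\<^sup>2)"
      using \<open>1 \<le> (1 + norm y)\<^sup>2\<close> order_trans[OF abs_ge_zero L]
      by (intro mult_left_mono) (auto simp: algebra_simps)
    also have "\<dots> = \<delta> * (C\<^sub>1 * (1 + 2 * C\<^sub>2) * (1 + norm y) ^ 3 * exp (- (norm y)\<^sup>2 / (4 * \<epsilon>)))"
      by (simp add: power2_eq_square power3_eq_cube mult_ac)
    finally show ?thesis .
  qed
  then show ?thesis by (rule that)
qed

lemma integrable_gauss_mixture_entropy:
  fixes p :: "nat \<Rightarrow> real^'n"
  assumes bounded: "\<And>k. k < N \<Longrightarrow> norm (p k) \<le> R"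
  shows "integrable lborel (\<lambda>y. gauss_mixture \<epsilon> N w p y * ln (gauss_mixture \<epsilon> N w p y))"
proof -
  obtain C where ln: "\<And>y. \<bar>ln (gauss_mixture \<epsilon> N w p y)\<bar> \<le> C * (1 + norm y)\<^sup>2"
    using abs_ln_gauss_mixture_le bounded by metis
  let ?A = "sum w {..<N} * (psi \<epsilon> (0::real^'n) * exp (R\<^sup>2 / (2 * \<epsilon>)))"
  show ?thesis
  proof (rule integrable_gaussian_envelope)
    fix y :: "real^'n"
    have "norm (gauss_mixture \<epsilon> N w p y * ln (gauss_mixture \<epsilon> N w p y))
        = gauss_mixture \<epsilon> N w p y * \<bar>ln (gauss_mixture \<epsilon> N w p y)\<bar>"
      using gauss_mixture_pos[of p y] by (simp add: abs_mult)
    also have "\<dots> \<le> (?A * exp (- (norm y)\<^sup>2 / (4 * \<epsilon>))) * (C * (1 + norm y)\<^sup>2)"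
      using gauss_mixture_le_gaussian[where p = p and y = y, OF bounded] ln[of y] gauss_mixture_pos[of p y]
      by (intro mult_mono) (auto simp: mult_ac)
    also have "\<dots> = ?A * C * (1 + norm y)\<^sup>2 * exp (- (norm y)\<^sup>2 / (4 * \<epsilon>))"
      by (simp add: mult_ac)
    finally show "norm (gauss_mixture \<epsilon> N w p y * ln (gauss_mixture \<epsilon> N w p y))
        \<le> ?A * C * (1 + norm y)\<^sup>2 * exp (- (norm y)\<^sup>2 / (4 * \<epsilon>))" .
  qed (use eps_pos in auto)
qed

lemma integrable_ln_gauss_mixture_moment:
  fixes p :: "nat \<Rightarrow> real^'n"
  assumes bounded: "\<And>k. k < N \<Longrightarrow> norm (p k) \<le> R" and a: "norm a \<le> R"
  shows "integrable lborel
    (\<lambda>y. ln (gauss_mixture \<epsilon> N w p y) *\<^sub>R ((psi \<epsilon> (y - a) / \<epsilon>) *\<^sub>R (y - a)))"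
proof -
  obtain C where ln: "\<And>y. \<bar>ln (gauss_mixture \<epsilon> N w p y)\<bar> \<le> C * (1 + norm y)\<^sup>2"
    using abs_ln_gauss_mixture_le bounded by metis
  have "R \<ge> 0"
    using a norm_ge_zero order_trans by blast
  let ?A = "psi \<epsilon> (0::real^'n) * exp (R\<^sup>2 / (2 * \<epsilon>)) / \<epsilon>"
  show ?thesis
  proof (rule integrable_gaussian_envelope)
    fix y :: "real^'n"
    have "norm (y - a) \<le> (1 + R) * (1 + norm y)"
      using norm_triangle_ineq4[of y a] a mult_nonneg_nonneg[OF \<open>R \<ge> 0\<close> norm_ge_zero[of y]]
      by (simp add: algebra_simps)
    have "norm (ln (gauss_mixture \<epsilon> N w p y) *\<^sub>R ((psi \<epsilon> (y - a) / \<epsilon>) *\<^sub>R (y - a)))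
        = \<bar>ln (gauss_mixture \<epsilon> N w p y)\<bar> * (psi \<epsilon> (y - a) / \<epsilon> * norm (y - a))"
      using psi_pos[OF eps_pos, of "y - a"] eps_pos by (simp add: abs_mult)
    also have "\<dots> \<le> (C * (1 + norm y)\<^sup>2)
        * ((?A * exp (- (norm y)\<^sup>2 / (4 * \<epsilon>))) * ((1 + R) * (1 + norm y)))"
    proof (rule mult_mono)
      show "psi \<epsilon> (y - a) / \<epsilon> * norm (y - a)
          \<le> (?A * exp (- (norm y)\<^sup>2 / (4 * \<epsilon>))) * ((1 + R) * (1 + norm y))"
        using psi_shift_le[OF eps_pos a, of y] \<open>norm (y - a) \<le> _\<close> eps_pos
          psi_pos[OF eps_pos, of "y - a"] psi_pos[OF eps_pos, of "0::real^'n"]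
        by (intro mult_mono) (auto simp: field_simps)
    qed (use ln[of y] eps_pos psi_pos[OF eps_pos, of "y - a"] psi_pos[OF eps_pos, of "0::real^'n"]
        \<open>R \<ge> 0\<close> in auto)
    also have "\<dots> = C * ?A * (1 + R) * (1 + norm y) ^ 3 * exp (- (norm y)\<^sup>2 / (4 * \<epsilon>))"
      by (simp add: power2_eq_square power3_eq_cube mult_ac)
    finally show "norm (ln (gauss_mixture \<epsilon> N w p y) *\<^sub>R ((psi \<epsilon> (y - a) / \<epsilon>) *\<^sub>R (y - a)))
        \<le> C * ?A * (1 + R) * (1 + norm y) ^ 3 * exp (- (norm y)\<^sup>2 / (4 * \<epsilon>))" .
  qed (use eps_pos in auto)
qed

lemma gauss_mixture_entropy_has_real_derivative:
  assumes "\<And>k. k < N \<Longrightarrow> (p k has_vector_derivative p' k) (at t)"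
  shows "((\<lambda>s. gauss_mixture \<epsilon> N w (\<lambda>k. p k s) y * ln (gauss_mixture \<epsilon> N w (\<lambda>k. p k s) y))
    has_real_derivative (ln (gauss_mixture \<epsilon> N w (\<lambda>k. p k t) y) + 1)
      * (\<Sum>k<N. w k * (psi \<epsilon> (y - p k t) / \<epsilon> * ((y - p k t) \<bullet> p' k)))) (at t)"
proof -
  have mixture: "((\<lambda>s. gauss_mixture \<epsilon> N w (\<lambda>k. p k s) y) has_real_derivative
      (\<Sum>k<N. w k * (psi \<epsilon> (y - p k t) / \<epsilon> * ((y - p k t) \<bullet> p' k)))) (at t)"
    unfolding gauss_mixture_def
    by (intro DERIV_sum DERIV_cmult psi_shift_has_real_derivative[OF eps_pos] assms) simp
  have xlnx: "((\<lambda>u. u * ln u) has_real_derivative ln u + 1) (at u)" if "u > 0" for u :: real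
    using that by (auto intro!: derivative_eq_intros)
  show ?thesis
    by (rule DERIV_chain2[OF xlnx[OF gauss_mixture_pos] mixture])
qed

lemma integral_entropy_integrand_derivative:
  fixes x u :: "nat \<Rightarrow> real^'n"
  shows "(\<integral>y. (ln (gauss_mixture \<epsilon> N w x y) + 1)
      * (\<Sum>k<N. w k * (psi \<epsilon> (y - x k) / \<epsilon> * ((y - x k) \<bullet> u k))) \<partial>lborel)
    = (\<Sum>k<N. w k * ((\<integral>y. ln (gauss_mixture \<epsilon> N w x y) *\<^sub>R ((psi \<epsilon> (y - x k) / \<epsilon>) *\<^sub>R (y - x k))
        \<partial>lborel) \<bullet> u k))"
proof -
  define R where "R = (\<Sum>j<N. norm (x j))"
  have bounded: "norm (x k) \<le> R" if "k < N" for k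
    unfolding R_def using that by (intro member_le_sum) auto
  define V where "V k = (\<lambda>y. ln (gauss_mixture \<epsilon> N w x y) *\<^sub>R ((psi \<epsilon> (y - x k) / \<epsilon>) *\<^sub>R (y - x k)))"
    for k
  define Z where "Z k = (\<lambda>y. psi \<epsilon> (y - x k) / \<epsilon> * ((y - x k) \<bullet> u k))" for k
  have int_V: "integrable lborel (V k)" if "k < N" for k
    unfolding V_def by (rule integrable_ln_gauss_mixture_moment[OF bounded bounded[OF that]])
  have int_Z: "integrable lborel (Z k)" for k
    unfolding Z_def by (rule integrable_psi_moment[OF eps_pos])
  have "(ln (gauss_mixture \<epsilon> N w x y) + 1) * (\<Sum>k<N. w k * Z k y)
      = (\<Sum>k<N. w k * (V k y \<bullet> u k)) + (\<Sum>k<N. w k * Z k y)" for y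
  proof -
    have "V k y \<bullet> u k = ln (gauss_mixture \<epsilon> N w x y) * Z k y" for k
      by (simp add: V_def Z_def)
    then show ?thesis
      by (simp add: sum_distrib_left algebra_simps flip: sum.distrib)
  qed
  then have "(\<integral>y. (ln (gauss_mixture \<epsilon> N w x y) + 1) * (\<Sum>k<N. w k * Z k y) \<partial>lborel)
      = (\<integral>y. (\<Sum>k<N. w k * (V k y \<bullet> u k)) + (\<Sum>k<N. w k * Z k y) \<partial>lborel)"
    by simp
  also have "\<dots> = (\<integral>y. (\<Sum>k<N. w k * (V k y \<bullet> u k)) \<partial>lborel) + (\<integral>y. (\<Sum>k<N. w k * Z k y) \<partial>lborel)"
    using int_V int_Z
    by (intro Bochner_Integration.integral_add Bochner_Integration.integrable_sum
        integrable_mult_right integrable_inner_left) auto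
  also have "(\<integral>y. (\<Sum>k<N. w k * (V k y \<bullet> u k)) \<partial>lborel) = (\<Sum>k<N. w k * (integral\<^sup>L lborel (V k) \<bullet> u k))"
    using int_V by (subst Bochner_Integration.integral_sum) (auto simp: integral_inner_left)
  also have "(\<integral>y. (\<Sum>k<N. w k * Z k y) \<partial>lborel) = 0"
  proof -
    have "integral\<^sup>L lborel (Z k) = 0" for k
      unfolding Z_def by (rule integral_psi_moment_eq_0)
    then show ?thesis
      using int_Z by (subst Bochner_Integration.integral_sum) auto
  qed
  finally show ?thesis
    by (simp add: V_def Z_def)
qed

lemma entropy_has_real_derivative:
  fixes v :: "nat \<Rightarrow> real \<Rightarrow> real^'n"
  assumes v': "\<And>k. k < N \<Longrightarrow> (v k has_vector_derivative v' k) (at t)"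
  shows "((\<lambda>s. entropyN \<epsilon> N w v s) has_real_derivative (\<Sum>k<N. w k * (gradE \<epsilon> N w v t (v k t) \<bullet> v' k)))
    (at t)"
proof -
  define F where "F s = (\<lambda>y. gauss_mixture \<epsilon> N w (\<lambda>k. v k s) y * ln (gauss_mixture \<epsilon> N w (\<lambda>k. v k s) y))"
    for s
  define F' where "F' = (\<lambda>y. (ln (gauss_mixture \<epsilon> N w (\<lambda>k. v k t) y) + 1)
    * (\<Sum>k<N. w k * (psi \<epsilon> (y - v k t) / \<epsilon> * ((y - v k t) \<bullet> v' k))))"
  define R where "R = 1 + (\<Sum>k<N. norm (v k t))"
  define L where "L = (\<Sum>k<N. norm (v' k) + 1)"
  have L: "norm (v' k) + 1 \<le> L" if "k < N" for k
    unfolding L_def using that by (intro member_le_sum[of k "{..<N}" "\<lambda>k. norm (v' k) + 1"]) auto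
  then have "L > 0"
    using L[OF N_pos] norm_ge_zero[of "v' 0"] by linarith
  obtain C where lip: "\<And>(p :: nat \<Rightarrow> real^'n) q y \<delta>. (\<And>k. k < N \<Longrightarrow> norm (p k) \<le> R) \<Longrightarrow>
    (\<And>k. k < N \<Longrightarrow> norm (q k) \<le> R) \<Longrightarrow> (\<And>k. k < N \<Longrightarrow> norm (p k - q k) \<le> \<delta>) \<Longrightarrow>
    \<bar>gauss_mixture \<epsilon> N w p y * ln (gauss_mixture \<epsilon> N w p y)
      - gauss_mixture \<epsilon> N w q y * ln (gauss_mixture \<epsilon> N w q y)\<bar>
      \<le> \<delta> * (C * (1 + norm y) ^ 3 * exp (- (norm y)\<^sup>2 / (4 * \<epsilon>)))"
    using gauss_mixture_entropy_lipschitz by blast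
  let ?g = "\<lambda>y::real^'n. L * C * ((1 + norm y) ^ 3 * exp (- (norm y)\<^sup>2 / (4 * \<epsilon>)))"
  have near: "\<forall>\<^sub>F s in at t. \<forall>k\<in>{..<N}. norm (v k s - v k t) \<le> (norm (v' k) + 1) * \<bar>s - t\<bar>"
    using v' by (intro eventually_ball_finite ballI has_vector_derivative_imp_eventually_lipschitz) auto
  have close: "\<forall>\<^sub>F s in at t. \<bar>s - t\<bar> < 1 / L"
    unfolding eventually_at using \<open>L > 0\<close> by (intro exI[of _ "1 / L"]) (auto simp: dist_real_def)
  have "\<forall>\<^sub>F s in at t. \<forall>y. \<bar>F s y - F t y\<bar> \<le> \<bar>s - t\<bar> * ?g y"
    using near close
  proof eventually_elim
    case (elim s)
    have step: "norm (v k s - v k t) \<le> L * \<bar>s - t\<bar>" if "k < N" for k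
    proof -
      have "norm (v k s - v k t) \<le> (norm (v' k) + 1) * \<bar>s - t\<bar>"
        using elim(1) that by simp
      also have "\<dots> \<le> L * \<bar>s - t\<bar>"
        using L[OF that] by (rule mult_right_mono) simp
      finally show ?thesis .
    qed
    have at_t: "norm (v k t) \<le> R" if "k < N" for k
      unfolding R_def using that member_le_sum[of k "{..<N}" "\<lambda>k. norm (v k t)"] by auto
    have at_s: "norm (v k s) \<le> R" if "k < N" for k
    proof -
      have "L * \<bar>s - t\<bar> \<le> 1"
        using elim(2) \<open>L > 0\<close> by (simp add: field_simps)
      then show ?thesis
        using step[OF that] at_t[OF that] norm_triangle_sub[of "v k s" "v k t"]
        unfolding R_def using member_le_sum[of k "{..<N}" "\<lambda>k. norm (v k t)"] that by auto
    qed
    show ?case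
      using lip[of "\<lambda>k. v k s" "\<lambda>k. v k t" "L * \<bar>s - t\<bar>", OF at_s at_t step]
      by (simp add: F_def mult_ac)
  qed
  then have "((\<lambda>s. integral\<^sup>L lborel (F s)) has_real_derivative integral\<^sup>L lborel F') (at t)"
  proof (rule has_real_derivative_integral_lipschitz[rotated 4])
    show "integrable lborel (F s)" for s
      unfolding F_def
      by (rule integrable_gauss_mixture_entropy[of _ "\<Sum>k<N. norm (v k s)"])
        (auto intro: member_le_sum[of _ "{..<N}" "\<lambda>k. norm (v k s)"])
    show "F' \<in> borel_measurable lborel"
      unfolding F'_def by measurable
    show "((\<lambda>s. F s y) has_real_derivative F' y) (at t)" for y
      unfolding F_def F'_def by (rule gauss_mixture_entropy_has_real_derivative[OF v'])
    show "integrable lborel ?g"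
      using eps_pos
      by (intro integrable_mult_right integrable_gaussian_envelope[where n = 3 and c = "4 * \<epsilon>" and C = 1])
        auto
  qed
  moreover have "entropyN \<epsilon> N w v s = integral\<^sup>L lborel (F s)" for s
    by (simp add: entropyN_def mollified_eq_gauss_mixture F_def)
  moreover have "integral\<^sup>L lborel F' = (\<Sum>k<N. w k * (gradE \<epsilon> N w v t (v k t) \<bullet> v' k))"
    unfolding F'_def integral_entropy_integrand_derivative by (simp add: gradE_eq[OF eps_pos])
  ultimately show ?thesis
    by simp
qed

end

lemma entropyN_has_real_derivative:
  fixes v :: "nat \<Rightarrow> real \<Rightarrow> real^'n"
  assumes "\<epsilon> > 0" and "\<And>k. k < N \<Longrightarrow> w k > 0"
    and v': "\<And>k. k < N \<Longrightarrow> (v k has_vector_derivative v' k) (at t)"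
  shows "((\<lambda>s. entropyN \<epsilon> N w v s) has_real_derivative (\<Sum>k<N. w k * (gradE \<epsilon> N w v t (v k t) \<bullet> v' k)))
    (at t)"
proof (cases "N = 0")
  case True
  then show ?thesis
    by (simp add: entropyN_def mollified_def)
next
  case False
  then interpret gauss_mixture_weights \<epsilon> N w
    using assms by unfold_locales auto
  show ?thesis
    using v' by (rule entropy_has_real_derivative)
qed

theorem theorem10:
  fixes v :: "nat \<Rightarrow> real \<Rightarrow> real^'n" and w :: "nat \<Rightarrow> real"
    and N :: nat and \<epsilon> \<gamma> :: real and T :: "real set"
  assumes dim: "CARD('n) \<ge> 2"
    and eps: "\<epsilon> > 0"
    and wpos: "\<And>i. i < N \<Longrightarrow> w i > 0"
    and T: "open T"
    and ode: "\<And>i t. i < N \<Longrightarrow> t \<in> T \<Longrightarrow>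
       (v i has_vector_derivative
          (- (\<Sum>j<N. w j *\<^sub>R (Amat \<gamma> (v i t - v j t) *v
                 (gradE \<epsilon> N w v t (v i t) - gradE \<epsilon> N w v t (v j t)))))) (at t)"
  shows "\<forall>t\<in>T.
      ((\<lambda>s. \<Sum>i<N. w i) has_real_derivative 0) (at t)
    \<and> ((\<lambda>s. \<Sum>i<N. w i *\<^sub>R v i s) has_vector_derivative 0) (at t)
    \<and> ((\<lambda>s. \<Sum>i<N. w i * (norm (v i s))\<^sup>2) has_real_derivative 0) (at t)
    \<and> ((\<lambda>s. entropyN \<epsilon> N w v s) has_real_derivative (- dissipN \<gamma> \<epsilon> N w v t)) (at t)
    \<and> dissipN \<gamma> \<epsilon> N w v t \<ge> 0"
proof (intro ballI conjI)
  fix t assume "t \<in> T"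
  define G where "G i = gradE \<epsilon> N w v t (v i t)" for i
  define v' where "v' i = - (\<Sum>j<N. w j *\<^sub>R (Amat \<gamma> (v i t - v j t) *v (G i - G j)))" for i
  have v': "(v i has_vector_derivative v' i) (at t)" if "i < N" for i
    using ode[OF that \<open>t \<in> T\<close>] by (simp add: v'_def G_def)
  show "((\<lambda>s. \<Sum>i<N. w i) has_real_derivative 0) (at t)"
    by simp
  have "((\<lambda>s. \<Sum>i<N. w i *\<^sub>R v i s) has_vector_derivative (\<Sum>i<N. w i *\<^sub>R v' i)) (at t)"
    using v' by (auto intro!: derivative_eq_intros)
  then show "((\<lambda>s. \<Sum>i<N. w i *\<^sub>R v i s) has_vector_derivative 0) (at t)"
    by (simp add: v'_def sum_negf sum_collision_momentum_eq_0)
  have "((\<lambda>s. \<Sum>i<N. w i * (norm (v i s))\<^sup>2) has_real_derivative (\<Sum>i<N. w i * (2 * (v i t \<bullet> v' i)))) (at t)"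
    using v' by (intro DERIV_sum DERIV_cmult norm_square_has_real_derivative) auto
  moreover have "(\<Sum>i<N. w i * (2 * (v i t \<bullet> v' i)))
      = - 2 * (\<Sum>i<N. w i * (v i t \<bullet> (\<Sum>j<N. w j *\<^sub>R (Amat \<gamma> (v i t - v j t) *v (G i - G j)))))"
    by (simp add: v'_def sum_negf sum_distrib_left mult_ac)
  ultimately show "((\<lambda>s. \<Sum>i<N. w i * (norm (v i s))\<^sup>2) has_real_derivative 0) (at t)"
    by (simp add: sum_collision_energy_eq_0)
  have "((\<lambda>s. entropyN \<epsilon> N w v s) has_real_derivative (\<Sum>i<N. w i * (G i \<bullet> v' i))) (at t)"
    unfolding G_def by (rule entropyN_has_real_derivative[OF eps wpos v'])
  moreover have "(\<Sum>i<N. w i * (G i \<bullet> v' i)) = - dissipN \<gamma> \<epsilon> N w v t"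
    unfolding dissipN_def G_def[symmetric] by (simp add: v'_def sum_negf sum_collision_entropy_eq)
  ultimately show "((\<lambda>s. entropyN \<epsilon> N w v s) has_real_derivative (- dissipN \<gamma> \<epsilon> N w v t)) (at t)"
    by simp
  show "dissipN \<gamma> \<epsilon> N w v t \<ge> 0"
    unfolding dissipN_def using wpos
    by (intro mult_nonneg_nonneg sum_nonneg) (auto intro: Amat_nonneg less_imp_le)
qed

end
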